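(* For every integer $n\ge0$, the Hankel determinants $D_0(n,s,q)=\det\big(F(2i+2j,s,q)\big)_{i,j=0}^n$ and $D_1(n,s,q)=\det\big(F(2i+2j+1,s,q)\big)_{i,j=0}^n$ satisfy $$D_0(n,s,q)=D_0(n,0,q)\prod_{j=0}^n\Big((s-q^{2j})(s-q^{2j+1})\Big(s-\frac{1}{q^{2j}}\Big)\Big(s-\frac{1}{q^{2j+1}}\Big)\Big)^{n-j},$$ $$D_1(n,s,q)=D_1(n,0,q)\,(1-s)^{n+1}\prod_{j=0}^n\Big((s-q^{2j+2})(s-q^{2j+1})\Big(s-\frac{1}{q^{2j+2}}\Big)\Big(s-\frac{1}{q^{2j+1}}\Big)\Big)^{n-j}.$$
   Context: $q,s$ are indeterminates. $(x;q)_n=\prod_{j=0}^{n-1}(1-q^jx)$. The Gaussian binomial coefficient is $\begin{bmatrix} n\\ j\end{bmatrix}_q=\frac{(q;q)_n}{(q;q)_j(q;q)_{n-j}}$ for $0\le j\le n$ and $0$ otherwise. $F(n,s,q)=\dfrac{\sum_{j=0}^n(-s)^j\begin{bmatrix} n\\ j\end{bmatrix}_{q}}{(q;q^2)_{\lfloor (n+1)/2\rfloor}}$. $D_0(n,0,q)$ and $D_1(n,0,q)$ denote the respective determinants at $s=0$. *)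

theory Defs
  imports Main "Jordan_Normal_Form.Determinant"
begin

definition qpoch :: "'a::comm_ring_1 \<Rightarrow> 'a \<Rightarrow> nat \<Rightarrow> 'a" where
  "qpoch x q n = (\<Prod>j<n. (1 - q ^ j * x))"

definition qbinom :: "'a::field \<Rightarrow> nat \<Rightarrow> nat \<Rightarrow> 'a" where
  "qbinom q n j = (if j \<le> n then qpoch q q n / (qpoch q q j * qpoch q q (n - j)) else 0)"

definition F :: "nat \<Rightarrow> 'a::field \<Rightarrow> 'a \<Rightarrow> 'a" where
  "F n s q = (\<Sum>j=0..n. (- s) ^ j * qbinom q n j) / qpoch q (q ^ 2) ((n + 1) div 2)"

definition D0 :: "nat \<Rightarrow> 'a::field \<Rightarrow> 'a \<Rightarrow> 'a" where
  "D0 n s q = det (mat (Suc n) (Suc n) (\<lambda>(i, j). F (2 * i + 2 * j) s q))"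

definition D1 :: "nat \<Rightarrow> 'a::field \<Rightarrow> 'a \<Rightarrow> 'a" where
  "D1 n s q = det (mat (Suc n) (Suc n) (\<lambda>(i, j). F (2 * i + 2 * j + 1) s q))"

end

theory Submission
  imports Defs "Jordan_Normal_Form.Char_Poly"
begin

text \<open>
  Both sides are polynomials in \<open>s\<close>. Since \<open>F(k, s, q)\<close> has degree at most \<open>k\<close> in \<open>s\<close>, each
  determinant has degree at most that of the product on the right, whose constant term is 1; so it
  suffices to show that the product divides the determinant. Up to a constant factor, \<open>F(n, s, q)\<close>
  is the Rogers-Szego polynomial \<open>h\<^sub>n(-s)\<close>, \<open>h\<^sub>n(x) = \<Sum>\<^sub>j [n, j]\<^sub>q x\<^sup>j\<close>, and its q-Pascal recurrences
  show that at \<open>s = q\<^sup>e\<close> the Hankel moments \<open>F(2m + p, s, q)\<close> have the form \<open>G(q\<^sup>2\<^sup>m)\<close> with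
  \<open>deg G \<le> (e - p) div 2\<close>; the symmetry \<open>F(k, 1/x, q) = (-1/x)\<^sup>k F(k, x, q)\<close> transfers this to
  \<open>s = q\<^sup>-\<^sup>e\<close>. Such a moment sequence satisfies a linear recurrence of order \<open>deg G + 1\<close>, so by
  unimodular column operations all but \<open>deg G + 1\<close> columns of the Hankel matrix vanish at that
  point. At \<open>s = 1\<close> the odd moments vanish, while the even moments are \<open>1 + m(s - 1)\<close> modulo
  \<open>(s - 1)\<^sup>2\<close>, so differencing rows and columns gives the factor \<open>(s - 1)\<^sup>2\<^sup>n\<close>.
\<close>

section \<open>Determinants of polynomial matrices\<close>

lemma power_sum_dvd_det:
  fixes A :: "'a::comm_ring_1 mat"
  assumes A: "A \<in> carrier_mat N N"
    and dvd: "\<And>i j. i < N \<Longrightarrow> j < N \<Longrightarrow> d ^ (a i + b j) dvd A $$ (i, j)"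
  shows "d ^ (sum a {0..<N} + sum b {0..<N}) dvd det A"
  unfolding det_def'[OF A]
proof (rule dvd_sum)
  fix p assume "p \<in> {p. p permutes {0..<N}}"
  then have p: "p permutes {0..<N}" by simp
  have "(\<Prod>i = 0..<N. d ^ (a i + b (p i))) dvd (\<Prod>i = 0..<N. A $$ (i, p i))"
    by (rule prod_dvd_prod) (use dvd p permutes_in_image[OF p] in auto)
  moreover have "(\<Prod>i = 0..<N. d ^ (a i + b (p i))) = d ^ (sum a {0..<N} + sum b {0..<N})"
    unfolding power_sum[symmetric] sum.distrib sum.permute[OF p, of b] by (simp add: comp_def)
  ultimately show "d ^ (sum a {0..<N} + sum b {0..<N}) dvd of_int (sign p) * (\<Prod>i = 0..<N. A $$ (i, p i))"
    by (simp add: dvd_mult2)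
qed

lemma degree_det_le:
  fixes A :: "'a::comm_ring_1 poly mat"
  assumes A: "A \<in> carrier_mat N N"
    and deg: "\<And>i j. i < N \<Longrightarrow> j < N \<Longrightarrow> degree (A $$ (i, j)) \<le> a i + b j"
  shows "degree (det A) \<le> sum a {0..<N} + sum b {0..<N}"
  unfolding det_def'[OF A]
proof (rule degree_sum_le)
  fix p assume "p \<in> {p. p permutes {0..<N}}"
  then have p: "p permutes {0..<N}" by simp
  have "degree (\<Prod>i = 0..<N. A $$ (i, p i)) \<le> (\<Sum>i = 0..<N. degree (A $$ (i, p i)))"
    using degree_prod_sum_le[of "{0..<N}" "\<lambda>i. A $$ (i, p i)"] by (simp add: comp_def)
  also have "\<dots> \<le> (\<Sum>i = 0..<N. a i + b (p i))"
    by (rule sum_mono) (use deg p permutes_in_image[OF p] in auto)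
  also have "\<dots> = sum a {0..<N} + sum b {0..<N}"
    unfolding sum.distrib sum.permute[OF p, of b] by (simp add: comp_def)
  finally show "degree (of_int (sign p) * (\<Prod>i = 0..<N. A $$ (i, p i)) :: 'a poly)
      \<le> sum a {0..<N} + sum b {0..<N}"
    using degree_mult_le[of "of_int (sign p) :: 'a poly"] by (simp add: degree_of_int)
qed (simp add: finite_permutations)

lemma det_unit_upper_triangular:
  assumes "A \<in> carrier_mat N N" "upper_triangular A" "\<And>i. i < N \<Longrightarrow> A $$ (i, i) = 1"
  shows "det A = 1"
  using assms by (simp add: det_upper_triangular diag_mat_def prod.distinct_set_conv_list[symmetric])

text \<open>
  Multiplying a matrix on the right by \<open>annihilator_mat R N\<close> keeps its first \<open>degree R\<close> columns and
  replaces column \<open>t \<ge> degree R\<close> by \<open>\<Sum>\<^sub>k coeff R k \<cdot> column (t - degree R + k)\<close>; for monic \<open>R\<close>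
  this matrix is unit upper triangular.
\<close>

definition annihilator_mat :: "'a::comm_ring_1 poly \<Rightarrow> nat \<Rightarrow> 'a mat" where
  "annihilator_mat R N = mat N N (\<lambda>(j, t).
     if t < degree R then (if j = t then 1 else 0)
     else if t \<le> j + degree R then coeff R (j + degree R - t) else 0)"

lemma dim_annihilator_mat [simp]:
  "dim_row (annihilator_mat R N) = N" "dim_col (annihilator_mat R N) = N"
  by (simp_all add: annihilator_mat_def)

lemma annihilator_mat_carrier [simp]: "annihilator_mat R N \<in> carrier_mat N N"
  by (simp add: carrier_matI)

lemma det_annihilator_mat:
  assumes "lead_coeff R = 1"
  shows "det (annihilator_mat R N) = 1"
proof (rule det_unit_upper_triangular)
  show "upper_triangular (annihilator_mat R N)"
    by (rule upper_triangularI) (auto simp: annihilator_mat_def coeff_eq_0)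
qed (use assms in \<open>auto simp: annihilator_mat_def\<close>)

lemma sum_mult_annihilator_mat_low:
  assumes "t < degree R" "t < N"
  shows "(\<Sum>j = 0..<N. f j * annihilator_mat R N $$ (j, t)) = f t"
  using assms by (simp add: annihilator_mat_def if_distrib[of "\<lambda>x. _ * x"] cong: if_cong)

lemma sum_mult_annihilator_mat:
  assumes "degree R \<le> t" "t < N"
  shows "(\<Sum>j = 0..<N. f j * annihilator_mat R N $$ (j, t))
    = (\<Sum>k\<le>degree R. coeff R k * f (t - degree R + k))"
proof -
  let ?D = "degree R"
  have "(\<Sum>j = 0..<N. f j * annihilator_mat R N $$ (j, t))
      = (\<Sum>j = 0 + (t - ?D)..?D + (t - ?D). f j * coeff R (j + ?D - t))"
    using assms
    by (intro sum.mono_neutral_cong_right) (auto simp: annihilator_mat_def coeff_eq_0)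
  also have "\<dots> = (\<Sum>k\<le>?D. coeff R k * f (t - ?D + k))"
    unfolding sum.shift_bounds_cl_nat_ivl atLeast0AtMost
    by (intro sum.cong refl) (use assms in \<open>simp add: mult.commute add.commute\<close>)
  finally show ?thesis .
qed

lemma annihilated_exp_poly_sequence:
  fixes R G :: "'a::comm_ring_1 poly"
  assumes "\<And>p. p \<le> degree G \<Longrightarrow> poly R (u * y ^ p) = 0"
  shows "(\<Sum>k\<le>degree R. coeff R k * (u ^ (m + k) * poly G (y ^ (m + k)))) = 0"
proof -
  have "(\<Sum>k\<le>degree R. coeff R k * (u ^ (m + k) * poly G (y ^ (m + k))))
      = (\<Sum>k\<le>degree R. \<Sum>p\<le>degree G. coeff G p * u ^ m * (y ^ m) ^ p * (coeff R k * (u * y ^ p) ^ k))"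
    unfolding poly_altdef sum_distrib_left
    by (intro sum.cong refl) (simp add: power_add power_mult_distrib mult_ac flip: power_mult)
  also have "\<dots> = (\<Sum>p\<le>degree G. coeff G p * u ^ m * (y ^ m) ^ p * poly R (u * y ^ p))"
    by (subst sum.swap) (simp add: poly_altdef sum_distrib_left)
  also have "\<dots> = 0"
    using assms by simp
  finally show ?thesis .
qed

section \<open>Hankel determinants\<close>

lemma hankel_mult_annihilator_mat:
  fixes \<mu> :: "nat \<Rightarrow> 'a::comm_ring_1"
  assumes "degree R \<le> t" "t < N" "i < N"
  shows "(mat N N (\<lambda>(i, j). \<mu> (i + j)) * annihilator_mat R N) $$ (i, t)
    = (\<Sum>k\<le>degree R. coeff R k * \<mu> (i + t - degree R + k))"
  using assms sum_mult_annihilator_mat[of R t N "\<lambda>j. \<mu> (i + j)"]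
  by (simp add: scalar_prod_def add.assoc)

lemma sum_indicator_greater: "(\<Sum>t = 0..<N. if d < t then 1 else 0) = N - Suc d"
proof -
  have "(\<Sum>t = 0..<N. if d < t then 1 else 0) = card {Suc d..<N}"
    unfolding card_eq_sum by (intro sum.mono_neutral_cong_right) auto
  then show ?thesis by simp
qed

lemma hankel_det_dvd_root:
  fixes \<mu> :: "nat \<Rightarrow> 'a::field poly"
  assumes \<mu>: "\<And>k. poly (\<mu> k) r = u ^ k * poly G (y ^ k)" and deg: "degree G \<le> d"
  shows "[:-r, 1:] ^ (n - d) dvd det (mat (Suc n) (Suc n) (\<lambda>(i, j). \<mu> (i + j)))"
proof -
  define N where "N = Suc n"
  define R where "R = (\<Prod>p = 0..d. [:-(u * y ^ p), 1:])"
  define R' where "R' = map_poly (\<lambda>c. [:c:]) R"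
  define M where "M = mat N N (\<lambda>(i, j). \<mu> (i + j))"
  define C where "C = annihilator_mat R' N"
  have deg_R: "degree R = Suc d"
    unfolding R_def by (subst degree_prod_eq_sum_degree) auto
  have deg_R': "degree R' = degree R" and coeff_R': "\<And>k. coeff R' k = [:coeff R k:]"
    unfolding R'_def by (simp_all add: degree_map_poly coeff_map_poly)
  have "lead_coeff R = 1"
    using lead_coeff_prod[of "\<lambda>p. [:-(u * y ^ p), 1:]" "{0..d}"] unfolding R_def by simp
  then have "det C = 1"
    unfolding C_def by (intro det_annihilator_mat) (simp add: deg_R' coeff_R')
  then have det_MC: "det (M * C) = det M"
    using det_mult[of M N C] by (simp add: M_def C_def)
  have R_roots: "poly R (u * y ^ p) = 0" if "p \<le> degree G" for p
    using that deg unfolding R_def poly_prod by (intro prod_zero) auto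
  have "[:-r, 1:] ^ (sum (\<lambda>_. 0) {0..<N} + sum (\<lambda>t. if d < t then 1 else 0) {0..<N}) dvd det (M * C)"
  proof (rule power_sum_dvd_det)
    fix i t assume it: "i < N" "t < N"
    show "[:-r, 1:] ^ (0 + (if d < t then 1 else 0)) dvd (M * C) $$ (i, t)"
    proof (cases "d < t")
      case True
      have "(M * C) $$ (i, t) = (\<Sum>k\<le>degree R. [:coeff R k:] * \<mu> (i + t - degree R + k))"
        unfolding M_def C_def using True it
        by (subst hankel_mult_annihilator_mat) (simp_all add: deg_R' coeff_R' deg_R)
      then have "poly ((M * C) $$ (i, t)) r
          = (\<Sum>k\<le>degree R. coeff R k * (u ^ ((i + t - degree R) + k) * poly G (y ^ ((i + t - degree R) + k))))"
        by (simp add: poly_sum \<mu>)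
      also have "\<dots> = 0"
        by (rule annihilated_exp_poly_sequence) (rule R_roots)
      finally show ?thesis
        using True by (simp add: poly_eq_0_iff_dvd)
    qed simp
  qed (simp add: M_def C_def carrier_matI)
  moreover have "sum (\<lambda>t. if d < t then 1 else 0) {0..<N} = n - d"
    unfolding sum_indicator_greater N_def by simp
  ultimately show ?thesis
    using det_MC by (simp add: M_def N_def)
qed

lemma first_order_taylor:
  fixes p :: "'a::idom poly"
  obtains \<rho> where "p = [:poly p c:] + smult (poly (pderiv p) c) [:-c, 1:] + [:-c, 1:] ^ 2 * \<rho>"
proof
  define r where "r = synthetic_div p c"
  have p: "p = [:-c, 1:] * r + [:poly p c:]"
    unfolding r_def by (rule synthetic_div_correct'[symmetric])
  have r: "r = [:-c, 1:] * synthetic_div r c + [:poly r c:]"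
    by (rule synthetic_div_correct'[symmetric])
  have "pderiv p = [:-c, 1:] * pderiv r + r"
    by (subst p) (simp add: pderiv_add pderiv_mult pderiv_pCons one_pCons[symmetric] del: mult_pCons_left)
  then have slope: "poly (pderiv p) c = poly r c"
    by simp
  have ring_identity: "X * (X * t + a) + b = b + a * X + X ^ 2 * t" for X t a b :: "'a poly"
    by (simp add: algebra_simps power2_eq_square)
  have "p = [:-c, 1:] * ([:-c, 1:] * synthetic_div r c + [:poly r c:]) + [:poly p c:]"
    by (simp only: r[symmetric] p[symmetric])
  also have "\<dots> = [:poly p c:] + [:poly r c:] * [:-c, 1:] + [:-c, 1:] ^ 2 * synthetic_div r c"
    by (rule ring_identity)
  finally show "p = [:poly p c:] + smult (poly (pderiv p) c) [:-c, 1:] + [:-c, 1:] ^ 2 * synthetic_div r c"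
    by (simp only: slope mult_pCons_left mult_zero_left pCons_0_0 add_0_right)
qed

lemma sum_mult_difference_mat:
  fixes f :: "nat \<Rightarrow> 'a::comm_ring_1"
  assumes "t < N"
  shows "(\<Sum>j = 0..<N. f j * annihilator_mat [:-1, 1:] N $$ (j, t)) = (if t = 0 then f t else f t - f (t - 1))"
  using assms by (simp add: sum_mult_annihilator_mat_low sum_mult_annihilator_mat)

lemma differences_dvd_of_unit_slope:
  fixes \<mu> :: "nat \<Rightarrow> 'a::field poly"
  assumes val: "\<And>k. poly (\<mu> k) 1 = 1" and slope: "\<And>k. poly (pderiv (\<mu> k)) 1 = of_nat k"
  shows "[:-1, 1:] dvd \<mu> (Suc k) - \<mu> k"
    and "[:-1, 1:] ^ 2 dvd \<mu> (Suc (Suc k)) - \<mu> (Suc k) - (\<mu> (Suc k) - \<mu> k)"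
proof -
  define X :: "'a poly" where "X = [:-1, 1:]"
  have taylor: "\<exists>\<rho>. \<mu> k = 1 + of_nat k * X + X ^ 2 * \<rho>" for k
  proof -
    obtain \<rho> where "\<mu> k = [:1:] + smult (of_nat k) X + X ^ 2 * \<rho>"
      using first_order_taylor[of "\<mu> k" 1] val slope unfolding X_def by metis
    then show ?thesis by (auto simp: of_nat_poly one_pCons)
  qed
  obtain \<rho>0 \<rho>1 \<rho>2 where "\<mu> k = 1 + of_nat k * X + X ^ 2 * \<rho>0"
    and "\<mu> (Suc k) = 1 + of_nat (Suc k) * X + X ^ 2 * \<rho>1"
    and "\<mu> (Suc (Suc k)) = 1 + of_nat (Suc (Suc k)) * X + X ^ 2 * \<rho>2"
    using taylor by metis
  then have "\<mu> (Suc k) - \<mu> k = X * (1 + X * (\<rho>1 - \<rho>0))"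
    and "\<mu> (Suc (Suc k)) - \<mu> (Suc k) - (\<mu> (Suc k) - \<mu> k) = X ^ 2 * (\<rho>2 - 2 * \<rho>1 + \<rho>0)"
    by (simp_all add: algebra_simps power2_eq_square)
  then have "X dvd \<mu> (Suc k) - \<mu> k" "X ^ 2 dvd \<mu> (Suc (Suc k)) - \<mu> (Suc k) - (\<mu> (Suc k) - \<mu> k)"
    by simp_all
  then show "[:-1, 1:] dvd \<mu> (Suc k) - \<mu> k"
    and "[:-1, 1:] ^ 2 dvd \<mu> (Suc (Suc k)) - \<mu> (Suc k) - (\<mu> (Suc k) - \<mu> k)"
    by (simp_all only: X_def)
qed

lemma hankel_det_dvd_one:
  fixes \<mu> :: "nat \<Rightarrow> 'a::field poly"
  assumes "\<And>k. poly (\<mu> k) 1 = 1" and "\<And>k. poly (pderiv (\<mu> k)) 1 = of_nat k"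
  shows "[:-1, 1:] ^ (2 * n) dvd det (mat (Suc n) (Suc n) (\<lambda>(i, j). \<mu> (i + j)))"
proof -
  note first_diff = differences_dvd_of_unit_slope(1)[OF assms]
    and second_diff = differences_dvd_of_unit_slope(2)[OF assms]
  define N where "N = Suc n"
  define M where "M = mat N N (\<lambda>(i, j). \<mu> (i + j))"
  define C where "C = annihilator_mat [:-1, 1 :: 'a poly:] N"
  define E where "E = transpose_mat C * (M * C)"
  have M: "M \<in> carrier_mat N N" and C: "C \<in> carrier_mat N N"
    by (simp_all add: M_def C_def)
  have "det C = 1"
    unfolding C_def by (simp add: det_annihilator_mat)
  then have "det E = det M"
    unfolding E_def
    by (simp add: det_mult[OF transpose_carrier_mat[THEN iffD2, OF C] mult_carrier_mat[OF M C]]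
        det_mult[OF M C] det_transpose[OF C])
  have MC: "(M * C) $$ (i, t) = (if t = 0 then \<mu> i else \<mu> (i + t) - \<mu> (i + t - 1))"
    if "i < N" "t < N" for i t
    using that sum_mult_difference_mat[of t N "\<lambda>j. \<mu> (i + j)"]
    by (simp add: M_def C_def scalar_prod_def)
  have E: "E $$ (i, t) = (if i = 0 then (M * C) $$ (i, t) else (M * C) $$ (i, t) - (M * C) $$ (i - 1, t))"
    if "i < N" "t < N" for i t
    using that sum_mult_difference_mat[of i N "\<lambda>j. (M * C) $$ (j, t)"]
    by (simp add: E_def M_def C_def scalar_prod_def mult.commute)
  have "[:-1, 1:] ^ (sum (\<lambda>i. if 0 < i then 1 else 0) {0..<N} + sum (\<lambda>i. if 0 < i then 1 else 0) {0..<N})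
      dvd det E"
  proof (rule power_sum_dvd_det)
    fix i t assume it: "i < N" "t < N"
    consider "i = 0" "t = 0" | i' where "i = Suc i'" "t = 0" | t' where "i = 0" "t = Suc t'"
      | i' t' where "i = Suc i'" "t = Suc t'"
      by (cases i; cases t) auto
    then show "[:-1, 1:] ^ ((if 0 < i then 1 else 0) + (if 0 < t then 1 else 0)) dvd E $$ (i, t)"
      by cases (use it first_diff second_diff in \<open>simp_all add: E MC power2_eq_square\<close>)
  qed (simp add: E_def M_def C_def carrier_matI)
  moreover have "sum (\<lambda>i. if 0 < i then 1 else 0) {0..<N} = n"
    unfolding sum_indicator_greater N_def by simp
  ultimately show ?thesis
    using \<open>det E = det M\<close> by (simp add: M_def N_def mult_2)
qed

lemma linear_power_dvd_cancel:
  fixes a b :: "'a::field"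
  assumes "a \<noteq> b" and "[:-a, 1:] ^ k dvd [:-b, 1:] ^ j * P"
  shows "[:-a, 1:] ^ k dvd P"
proof (cases "P = 0")
  case False
  then have "k \<le> order a ([:-b, 1:] ^ j * P)"
    using assms(2) by (simp add: order_divides)
  also have "\<dots> = order a P"
    using False assms(1) by (simp add: order_mult order_0I)
  finally show ?thesis by (simp add: order_divides)
qed simp

lemma prod_linear_powers_dvd:
  fixes P :: "'a::field poly" and r :: "'b \<Rightarrow> 'a"
  assumes "finite I" "inj_on r I" "\<And>i. i \<in> I \<Longrightarrow> [:-r i, 1:] ^ m i dvd P"
  shows "(\<Prod>i\<in>I. [:-r i, 1:] ^ m i) dvd P"
  using assms
proof (induction I arbitrary: P rule: finite_induct)
  case (insert x I)
  obtain P' where P': "P = [:-r x, 1:] ^ m x * P'"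
    using insert.prems(2) by blast
  have "(\<Prod>i\<in>I. [:-r i, 1:] ^ m i) dvd P'"
  proof (rule insert.IH)
    fix i assume "i \<in> I"
    with insert.hyps(2) insert.prems have "r i \<noteq> r x" "[:-r i, 1:] ^ m i dvd [:-r x, 1:] ^ m x * P'"
      by (auto simp: P' inj_on_def)
    then show "[:-r i, 1:] ^ m i dvd P'"
      by (rule linear_power_dvd_cancel)
  qed (use insert.prems in \<open>simp add: inj_on_insert\<close>)
  then show ?case
    unfolding prod.insert[OF insert.hyps] P' by (rule mult_dvd_mono[OF dvd_refl])
qed simp

lemma poly_eq_poly_0_mult_of_dvd:
  fixes P D :: "'a::field poly"
  assumes "P dvd D" "P \<noteq> 0" "degree D \<le> degree P" "poly P 0 = 1"
  shows "poly D s = poly D 0 * poly P s"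
proof -
  obtain K where K: "D = P * K"
    using assms(1) by blast
  have "degree K = 0"
    using assms(2,3) K by (cases "K = 0") (simp_all add: degree_mult_eq)
  then obtain k where "K = [:k:]"
    using degree0_coeffs by blast
  with K assms(4) show ?thesis by simp
qed

lemma sum_index_weighted_palindromic:
  fixes b :: "nat \<Rightarrow> 'a::comm_ring_1"
  assumes "\<And>j. j \<le> N \<Longrightarrow> b (N - j) = b j"
  shows "2 * (\<Sum>j = 0..N. of_nat j * b j) = of_nat N * (\<Sum>j = 0..N. b j)"
proof -
  have "(\<Sum>j = 0..N. of_nat j * b j) = (\<Sum>j = 0..N. of_nat (N - j) * b (N - j))"
    by (rule sum.reindex_bij_witness[where i="\<lambda>j. N - j" and j="\<lambda>j. N - j"]) auto
  also have "\<dots> = (\<Sum>j = 0..N. (of_nat N - of_nat j) * b j)"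
    by (intro sum.cong refl) (simp add: assms of_nat_diff)
  also have "\<dots> = of_nat N * (\<Sum>j = 0..N. b j) - (\<Sum>j = 0..N. of_nat j * b j)"
    by (simp add: sum_subtractf sum_distrib_left left_diff_distrib)
  finally show ?thesis
    by (metis eq_diff_eq mult_2)
qed

section \<open>q-binomials and Rogers-Szego polynomials\<close>

lemma qpoch_0 [simp]: "qpoch x q 0 = 1"
  by (simp add: qpoch_def)

lemma qpoch_Suc: "qpoch x q (Suc n) = qpoch x q n * (1 - q ^ n * x)"
  by (simp add: qpoch_def)

lemma qpoch_q2_Suc: "qpoch x (x ^ 2) (Suc m) = qpoch x (x ^ 2) m * (1 - x ^ (2 * m + 1))"
  by (simp add: qpoch_Suc mult.commute flip: power_mult)

lemma qbinom_eq_0 [simp]: "n < k \<Longrightarrow> qbinom q n k = 0"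
  by (simp add: qbinom_def)

lemma qbinom_symmetric: "k \<le> n \<Longrightarrow> qbinom q n (n - k) = qbinom q n k"
  by (simp add: qbinom_def mult.commute)

lemma F_0 [simp]: "F 0 s q = 1"
  by (simp add: F_def qbinom_def)

definition rogers_szego :: "'a::field \<Rightarrow> nat \<Rightarrow> 'a \<Rightarrow> 'a" where
  "rogers_szego q n x = (\<Sum>j = 0..n. x ^ j * qbinom q n j)"

lemma F_eq_rogers_szego: "F n s q = rogers_szego q n (- s) / qpoch q (q ^ 2) ((n + 1) div 2)"
  by (simp add: F_def rogers_szego_def mult.commute)

lemma rogers_szego_inverse:
  assumes "x \<noteq> 0"
  shows "rogers_szego q n (1 / x) = (1 / x) ^ n * rogers_szego q n x"
proof -
  have "x ^ n * rogers_szego q n (1 / x) = (\<Sum>j = 0..n. x ^ (n - j) * qbinom q n j)"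
    unfolding rogers_szego_def sum_distrib_left
    by (intro sum.cong refl) (use assms in \<open>auto simp: power_diff field_simps\<close>)
  also have "\<dots> = (\<Sum>j = 0..n. x ^ j * qbinom q n (n - j))"
    by (rule sum.reindex_bij_witness[where i="\<lambda>j. n - j" and j="\<lambda>j. n - j"]) auto
  also have "\<dots> = rogers_szego q n x"
    unfolding rogers_szego_def by (intro sum.cong refl) (simp add: qbinom_symmetric)
  finally show ?thesis
    using assms by (simp add: field_simps)
qed

lemma F_inverse:
  assumes "x \<noteq> 0"
  shows "F k (1 / x) q = (- 1 / x) ^ k * F k x q"
  using rogers_szego_inverse[of "- x" q k] assms by (simp add: F_eq_rogers_szego)

definition F_poly :: "'a::field \<Rightarrow> nat \<Rightarrow> 'a poly" where
  "F_poly q k = smult (1 / qpoch q (q ^ 2) ((k + 1) div 2)) (\<Sum>j = 0..k. monom ((- 1) ^ j * qbinom q k j) j)"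

lemma poly_F_poly: "poly (F_poly q k) s = F k s q"
  unfolding F_poly_def F_def poly_smult poly_sum poly_monom
  by (simp add: power_minus[of s] mult_ac)

lemma degree_F_poly: "degree (F_poly q k) \<le> k"
  unfolding F_poly_def
  by (intro order.trans[OF degree_smult_le] degree_sum_le) (auto intro: order.trans[OF degree_monom_le])

definition F_hankel :: "'a::field \<Rightarrow> nat \<Rightarrow> nat \<Rightarrow> 'a poly mat" where
  "F_hankel q p n = mat (Suc n) (Suc n) (\<lambda>(i, j). F_poly q (2 * (i + j) + p))"

lemma poly_det_F_hankel:
  "poly (det (F_hankel q 0 n)) s = D0 n s q"
  "poly (det (F_hankel q 1 n)) s = D1 n s q"
  unfolding D0_def D1_def F_hankel_def
  by (rule poly_det_cong[of _ "Suc n"]; simp add: poly_F_poly algebra_simps)+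

lemma degree_det_F_hankel: "degree (det (F_hankel q p n)) \<le> (\<Sum>i = 0..n. 4 * i + p)"
proof -
  have "degree (det (F_hankel q p n)) \<le> (\<Sum>i = 0..<Suc n. 2 * i + p) + (\<Sum>j = 0..<Suc n. 2 * j)"
    by (rule degree_det_le) (auto simp: F_hankel_def intro: order.trans[OF degree_F_poly])
  also have "\<dots> = (\<Sum>i = 0..n. 4 * i + p)"
    by (simp add: atLeastLessThanSuc_atLeastAtMost sum.distrib[symmetric])
  finally show ?thesis .
qed

lemma prod_power_int_symmetric:
  fixes q :: "'a::field"
  shows "(\<Prod>e = - int K..int K. [:-(q powi e), 1:] ^ m (nat \<bar>e\<bar>))
    = [:-1, 1:] ^ m 0 * (\<Prod>k = 1..K. ([:-(q ^ k), 1:] * [:-(1 / q ^ k), 1:]) ^ m k)"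
proof (induction K)
  case (Suc K)
  let ?f = "\<lambda>e. [:-(q powi e), 1:] ^ m (nat \<bar>e\<bar>)"
  have "{- int (Suc K)..int (Suc K)} = insert (int (Suc K)) (insert (- int (Suc K)) {- int K..int K})"
    by auto
  then have "(\<Prod>e = - int (Suc K)..int (Suc K). ?f e) = ?f (int (Suc K)) * ?f (- int (Suc K)) * (\<Prod>e = - int K..int K. ?f e)"
    by (simp add: mult.assoc del: mult_pCons_left mult_pCons_right)
  also have "?f (int (Suc K)) * ?f (- int (Suc K)) = ([:-(q ^ Suc K), 1:] * [:-(1 / q ^ Suc K), 1:]) ^ m (Suc K)"
    unfolding power_mult_distrib nat_int abs_minus_cancel abs_of_nat power_int_minus power_int_of_nat
    by (simp only: inverse_eq_divide)
  finally show ?case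
    unfolding Suc.IH by (simp add: mult_ac del: mult_pCons_left mult_pCons_right)
qed simp

definition hankel_even_factor :: "'a::field \<Rightarrow> nat \<Rightarrow> 'a poly" where
  "hankel_even_factor q n = (\<Prod>j = 0..n. ([:-(q ^ (2 * j)), 1:] * [:-(q ^ (2 * j + 1)), 1:]
     * [:-(1 / q ^ (2 * j)), 1:] * [:-(1 / q ^ (2 * j + 1)), 1:]) ^ (n - j))"

definition hankel_odd_factor :: "'a::field \<Rightarrow> nat \<Rightarrow> 'a poly" where
  "hankel_odd_factor q n = [:1, -1:] ^ (n + 1) * (\<Prod>j = 0..n. ([:-(q ^ (2 * j + 2)), 1:] * [:-(q ^ (2 * j + 1)), 1:]
     * [:-(1 / q ^ (2 * j + 2)), 1:] * [:-(1 / q ^ (2 * j + 1)), 1:]) ^ (n - j))"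

lemma hankel_even_factor_eq:
  "hankel_even_factor q n
    = [:-1, 1:] ^ (2 * n) * (\<Prod>k = 1..2 * n + 1. ([:-(q ^ k), 1:] * [:-(1 / q ^ k), 1:]) ^ (n - k div 2))"
proof -
  define L where "L k = ([:-(q ^ k), 1:] * [:-(1 / q ^ k), 1:]) ^ (n - k div 2)" for k
  have "[:-1, 1:] ^ (2 * n) * (\<Prod>k = 1..2 * n + 1. L k) = (\<Prod>k = 2 * 0..Suc (2 * n). L k)"
    by (simp add: L_def prod.atLeast_Suc_atMost[of 0] power_mult power2_eq_square
        del: mult_pCons_left mult_pCons_right)
  also have "\<dots> = (\<Prod>j = 0..n. L (2 * j) * L (Suc (2 * j)))"
    by (rule prod.in_pairs)
  also have "\<dots> = hankel_even_factor q n"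
    unfolding hankel_even_factor_def L_def
    by (intro prod.cong refl) (simp add: power_mult_distrib mult_ac del: mult_pCons_left mult_pCons_right)
  finally show ?thesis
    by (simp add: L_def)
qed

lemma hankel_odd_factor_eq:
  "[:-1, 1:] ^ (n + 1) * (\<Prod>k = 1..2 * n + 2. ([:-(q ^ k), 1:] * [:-(1 / q ^ k), 1:]) ^ (n - (k - 1) div 2))
    = smult ((- 1) ^ (n + 1)) (hankel_odd_factor q n)"
proof -
  define L where "L k = ([:-(q ^ k), 1:] * [:-(1 / q ^ k), 1:]) ^ (n - (k - 1) div 2)" for k
  have "(\<Prod>k = 1..2 * n + 2. L k) = (\<Prod>k = 2 * 0..Suc (2 * n). L (Suc k))"
    using prod.shift_bounds_cl_Suc_ivl[of L 0 "2 * n + 1"] by simp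
  also have "\<dots> = (\<Prod>j = 0..n. L (Suc (2 * j)) * L (Suc (Suc (2 * j))))"
    by (rule prod.in_pairs)
  finally have "(\<Prod>k = 1..2 * n + 2. L k) = (\<Prod>j = 0..n. ([:-(q ^ (2 * j + 2)), 1:] * [:-(q ^ (2 * j + 1)), 1:]
     * [:-(1 / q ^ (2 * j + 2)), 1:] * [:-(1 / q ^ (2 * j + 1)), 1:]) ^ (n - j))"
    unfolding L_def by (simp add: power_mult_distrib mult_ac del: mult_pCons_left mult_pCons_right)
  moreover have "[:-1, 1:] ^ (n + 1) = smult ((- 1) ^ (n + 1)) ([:1, -1:] ^ (n + 1) :: 'a poly)"
    unfolding smult_power[symmetric] by simp
  ultimately show ?thesis
    by (simp add: L_def hankel_odd_factor_def)
qed

lemma degree_four_linear_factors_power: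
  "degree (([:-a, 1:] * [:-b, 1:] * [:-c, 1:] * [:-d, 1:]) ^ k :: 'a::field poly) = 4 * k"
  by (simp add: degree_power_eq degree_mult_eq)

lemma degree_hankel_even_factor: "degree (hankel_even_factor q n) = (\<Sum>i = 0..n. 4 * i)"
proof -
  have "degree (hankel_even_factor q n) = (\<Sum>j = 0..n. 4 * (n - j))"
    unfolding hankel_even_factor_def
    by (subst degree_prod_eq_sum_degree) (simp_all only: degree_four_linear_factors_power, auto)
  also have "\<dots> = (\<Sum>i = 0..n. 4 * i)"
    by (subst (2) sum.atLeastAtMost_rev) simp
  finally show ?thesis .
qed

lemma degree_hankel_odd_factor: "degree (hankel_odd_factor q n) = (\<Sum>i = 0..n. 4 * i + 1)"
proof -
  define Q :: "'a poly" where "Q = (\<Prod>j = 0..n. ([:-(q ^ (2 * j + 2)), 1:] * [:-(q ^ (2 * j + 1)), 1:]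
     * [:-(1 / q ^ (2 * j + 2)), 1:] * [:-(1 / q ^ (2 * j + 1)), 1:]) ^ (n - j))"
  have "degree Q = (\<Sum>j = 0..n. 4 * (n - j))"
    unfolding Q_def
    by (subst degree_prod_eq_sum_degree) (simp_all only: degree_four_linear_factors_power, auto)
  moreover have "Q \<noteq> 0" "[:1, -1:] ^ (n + 1) \<noteq> (0 :: 'a poly)"
    by (auto simp: Q_def simp del: mult_pCons_left mult_pCons_right power_Suc)
  moreover have "degree ([:1, -1:] ^ (n + 1) :: 'a poly) = n + 1"
    by (simp add: degree_power_eq del: mult_pCons_left mult_pCons_right power_Suc)
  ultimately have "degree (hankel_odd_factor q n) = (n + 1) + (\<Sum>j = 0..n. 4 * (n - j))"
    unfolding hankel_odd_factor_def Q_def[symmetric] by (simp add: degree_mult_eq)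
  also have "\<dots> = (\<Sum>i = 0..n. 4 * i) + (\<Sum>i = 0..n. 1)"
    by (subst (2) sum.atLeastAtMost_rev) simp
  also have "\<dots> = (\<Sum>i = 0..n. 4 * i + 1)"
    by (simp only: sum.distrib)
  finally show ?thesis .
qed

lemma hankel_factor_nonzero: "hankel_even_factor q n \<noteq> 0" "hankel_odd_factor q n \<noteq> 0"
  by (auto simp: hankel_even_factor_def hankel_odd_factor_def simp del: mult_pCons_left mult_pCons_right)

lemma poly_hankel_factor_0:
  assumes "q \<noteq> 0"
  shows "poly (hankel_even_factor q n) 0 = 1" "poly (hankel_odd_factor q n) 0 = 1"
  using assms
  by (simp_all add: hankel_even_factor_def hankel_odd_factor_def poly_prod field_simps)

section \<open>Divisibility when \<open>q\<close> is not a root of unity\<close>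

locale q_not_root_of_unity =
  fixes q :: "'a::field_char_0"
  assumes q_nonzero: "q \<noteq> 0" and q_power_neq_1: "\<And>k::nat. 0 < k \<Longrightarrow> q ^ k \<noteq> 1"
begin

lemma one_minus_q_power_nonzero: "0 < k \<Longrightarrow> 1 - q ^ k \<noteq> 0"
  using q_power_neq_1 by simp

lemma qpoch_q_nonzero: "qpoch q q n \<noteq> 0"
  using one_minus_q_power_nonzero[of "Suc _"] by (simp add: qpoch_def mult.commute)

lemma qpoch_q2_nonzero: "qpoch q (q ^ 2) n \<noteq> 0"
  using one_minus_q_power_nonzero[of "Suc (2 * _)"]
  by (simp add: qpoch_def mult.commute flip: power_mult)

lemma qbinom_absorption: "(1 - q ^ Suc n) * qbinom q n k = (1 - q ^ Suc k) * qbinom q (Suc n) (Suc k)"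
proof (cases "k \<le> n")
  case True
  have "Suc n - Suc k = n - k" by simp
  with True show ?thesis
    using qpoch_q_nonzero one_minus_q_power_nonzero[of "Suc k"]
    by (simp add: qbinom_def qpoch_Suc field_simps)
qed (simp add: qbinom_def)

lemma qbinom_pascal: "qbinom q (Suc n) (Suc k) = qbinom q n k + q ^ Suc k * qbinom q n (Suc k)"
proof (cases "k < n")
  case True
  then obtain m where m: "n = Suc (k + m)"
    using less_imp_Suc_add by blast
  have split: "1 - q ^ Suc n = (1 - q ^ Suc k) + q ^ Suc k * (1 - q ^ Suc m)"
    by (simp add: m algebra_simps flip: power_add)
  have field_identity: "A * (a + t * c) / (B * a * (C * c)) = A / (B * (C * c)) + t * (A / (B * a * C))"
    if "B \<noteq> 0" "C \<noteq> 0" "a \<noteq> 0" "c \<noteq> 0" for A B C a c t :: 'a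
    using that by (simp add: field_simps)
  have "qbinom q (Suc n) (Suc k) = qpoch q q n * (1 - q ^ Suc n)
      / (qpoch q q k * (1 - q ^ Suc k) * (qpoch q q m * (1 - q ^ Suc m)))"
    by (simp add: qbinom_def qpoch_Suc m power_Suc2 del: power_Suc)
  also have "\<dots> = qbinom q n k + q ^ Suc k * qbinom q n (Suc k)"
    unfolding split
    using one_minus_q_power_nonzero[of "Suc k"] one_minus_q_power_nonzero[of "Suc m"]
    by (subst field_identity)
      (simp_all add: qpoch_q_nonzero qbinom_def qpoch_Suc m power_Suc2 del: power_Suc)
  finally show ?thesis .
next
  case False
  then consider "k = n" | "n < k" by linarith
  then show ?thesis
    by cases (simp_all add: qbinom_def qpoch_q_nonzero)
qed

lemma rogers_szego_q_shift:
  "rogers_szego q (Suc n) (q * x) = rogers_szego q (Suc n) x - x * (1 - q ^ Suc n) * rogers_szego q n x"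
proof -
  have "rogers_szego q (Suc n) (q * x) - rogers_szego q (Suc n) x
      = (\<Sum>j = 0..Suc n. x ^ j * ((q ^ j - 1) * qbinom q (Suc n) j))"
    by (simp add: rogers_szego_def sum_subtractf power_mult_distrib algebra_simps)
  also have "\<dots> = (\<Sum>j = 0..n. x ^ Suc j * ((q ^ Suc j - 1) * qbinom q (Suc n) (Suc j)))"
    by (subst sum.atLeast0_atMost_Suc_shift) simp
  also have "\<dots> = (\<Sum>j = 0..n. x ^ Suc j * - ((1 - q ^ Suc n) * qbinom q n j))"
  proof (intro sum.cong refl)
    fix j
    have "(q ^ Suc j - 1) * qbinom q (Suc n) (Suc j) = - ((1 - q ^ Suc j) * qbinom q (Suc n) (Suc j))"
      by (simp add: algebra_simps)
    also have "\<dots> = - ((1 - q ^ Suc n) * qbinom q n j)"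
      by (simp only: qbinom_absorption)
    finally show "x ^ Suc j * ((q ^ Suc j - 1) * qbinom q (Suc n) (Suc j))
        = x ^ Suc j * - ((1 - q ^ Suc n) * qbinom q n j)"
      by simp
  qed
  also have "\<dots> = - x * (1 - q ^ Suc n) * rogers_szego q n x"
    by (simp add: rogers_szego_def sum_distrib_left algebra_simps)
  finally show ?thesis
    by (simp add: algebra_simps)
qed

lemma rogers_szego_Suc: "rogers_szego q (Suc n) x = x * rogers_szego q n x + rogers_szego q n (q * x)"
proof -
  have shift: "rogers_szego q m y = 1 + (\<Sum>j = 0..m. y ^ Suc j * qbinom q m (Suc j))" for m y
  proof -
    have "rogers_szego q m y = (\<Sum>j = 0..Suc m. y ^ j * qbinom q m j)"
      by (simp add: rogers_szego_def qbinom_def)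
    also have "\<dots> = 1 + (\<Sum>j = 0..m. y ^ Suc j * qbinom q m (Suc j))"
      by (subst sum.atLeast0_atMost_Suc_shift) (simp add: qbinom_def qpoch_q_nonzero)
    finally show ?thesis .
  qed
  have "rogers_szego q (Suc n) x = 1 + (\<Sum>j = 0..n. x ^ Suc j * qbinom q n j)
      + (\<Sum>j = 0..n. (q * x) ^ Suc j * qbinom q n (Suc j))"
    unfolding shift[of "Suc n"] qbinom_pascal distrib_left sum.distrib
    by (simp add: power_mult_distrib mult_ac)
  also have "(\<Sum>j = 0..n. x ^ Suc j * qbinom q n j) = x * rogers_szego q n x"
    by (simp add: rogers_szego_def sum_distrib_left mult_ac)
  finally show ?thesis
    using shift[of n "q * x"] by simp
qed

lemma rogers_szego_minus_one:
  "rogers_szego q (2 * m) (- 1) = qpoch q (q ^ 2) m" "rogers_szego q (2 * m + 1) (- 1) = 0"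
proof (induction m)
  case 0
  show "rogers_szego q (2 * 0) (- 1) = qpoch q (q ^ 2) 0" "rogers_szego q (2 * 0 + 1) (- 1) = 0"
    by (simp_all add: rogers_szego_def qbinom_def qpoch_q_nonzero)
next
  case (Suc m)
  have step: "rogers_szego q (Suc (Suc k)) (- 1) = (1 - q ^ Suc k) * rogers_szego q k (- 1)" for k
    unfolding rogers_szego_Suc[of "Suc k" "- 1"] rogers_szego_q_shift[of k "- 1"]
    by (simp add: algebra_simps)
  show "rogers_szego q (2 * Suc m) (- 1) = qpoch q (q ^ 2) (Suc m)"
    using step[of "2 * m"] Suc.IH(1) by (simp add: qpoch_Suc mult.commute flip: power_mult)
  show "rogers_szego q (2 * Suc m + 1) (- 1) = 0"
    using step[of "2 * m + 1"] Suc.IH(2) by simp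
qed

lemma F_one: "F (2 * m) 1 q = 1" "F (2 * m + 1) 1 q = 0"
  using rogers_szego_minus_one[of m] qpoch_q2_nonzero[of m]
  by (simp_all add: F_eq_rogers_szego)

lemma F_odd_qpow_Suc: "F (2 * m + 1) (q ^ Suc e) q = F (2 * m + 1) (q ^ e) q + q ^ e * F (2 * m) (q ^ e) q"
proof -
  have shift: "rogers_szego q (2 * m + 1) (- (q ^ Suc e))
      = rogers_szego q (2 * m + 1) (- (q ^ e)) + q ^ e * (1 - q ^ (2 * m + 1)) * rogers_szego q (2 * m) (- (q ^ e))"
    using rogers_szego_q_shift[of "2 * m" "- (q ^ e)"] by simp
  have field_identity: "(A + t * w * B) / (P * w) = A / (P * w) + t * (B / P)"
    if "P \<noteq> 0" "w \<noteq> 0" for A B P t w :: 'a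
    using that by (simp add: field_simps)
  have halves: "(2 * m + 1 + 1) div 2 = Suc m" "(2 * m + 1) div 2 = m"
    by simp_all
  show ?thesis
    unfolding F_eq_rogers_szego halves qpoch_q2_Suc shift
    by (intro field_identity qpoch_q2_nonzero one_minus_q_power_nonzero) simp_all
qed

lemma F_even_qpow_Suc:
  "F (2 * m + 2) (q ^ Suc e) q = F (2 * m + 2) (q ^ e) q + q ^ e * (1 - q ^ (2 * m + 2)) * F (2 * m + 1) (q ^ e) q"
proof -
  have "rogers_szego q (2 * m + 2) (- (q ^ Suc e))
      = rogers_szego q (2 * m + 2) (- (q ^ e)) + q ^ e * (1 - q ^ (2 * m + 2)) * rogers_szego q (2 * m + 1) (- (q ^ e))"
    using rogers_szego_q_shift[of "2 * m + 1" "- (q ^ e)"] by simp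
  moreover have "(2 * m + 2 + 1) div 2 = Suc m" "(2 * m + 1 + 1) div 2 = Suc m"
    by simp_all
  ultimately show ?thesis
    by (simp add: F_eq_rogers_szego add_divide_distrib)
qed

lemma F_qpow_moment_polys_Suc:
  assumes G: "\<And>m. F (2 * m) (q ^ e) q = poly G ((q ^ 2) ^ m)"
    and G': "\<And>m. F (2 * m + 1) (q ^ e) q = poly G' ((q ^ 2) ^ m)"
  shows "F (2 * m) (q ^ Suc e) q = poly (G + smult (q ^ e) ([:1, -1:] * pcompose G' [:0, 1 / q ^ 2:])) ((q ^ 2) ^ m)"
    and "F (2 * m + 1) (q ^ Suc e) q = poly (G' + smult (q ^ e) G) ((q ^ 2) ^ m)"
proof -
  show "F (2 * m + 1) (q ^ Suc e) q = poly (G' + smult (q ^ e) G) ((q ^ 2) ^ m)"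
    unfolding F_odd_qpow_Suc G' G by simp
  show "F (2 * m) (q ^ Suc e) q = poly (G + smult (q ^ e) ([:1, -1:] * pcompose G' [:0, 1 / q ^ 2:])) ((q ^ 2) ^ m)"
  proof (cases m)
    case (Suc m')
    have step: "F (2 * m) (q ^ Suc e) q
        = F (2 * m' + 2) (q ^ e) q + q ^ e * (1 - q ^ (2 * m' + 2)) * F (2 * m' + 1) (q ^ e) q"
      using F_even_qpow_Suc[of m' e] Suc by simp
    have even: "F (2 * m' + 2) (q ^ e) q = poly G ((q ^ 2) ^ m)"
      using G[of m] Suc by simp
    have odd: "F (2 * m' + 1) (q ^ e) q = poly (pcompose G' [:0, 1 / q ^ 2:]) ((q ^ 2) ^ m)"
      using G'[of m'] q_nonzero Suc by (simp add: poly_pcompose)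
    have power: "q ^ (2 * m' + 2) = (q ^ 2) ^ m"
      unfolding Suc power_mult[symmetric] by (simp add: power_add)
    show ?thesis
      unfolding step even odd power by (simp add: algebra_simps)
  qed (use G[of 0] in simp)
qed

lemma F_qpow_moment_polys:
  "\<exists>G G'. (\<forall>m. F (2 * m) (q ^ e) q = poly G ((q ^ 2) ^ m)) \<and> degree G \<le> e div 2
     \<and> (\<forall>m. F (2 * m + 1) (q ^ e) q = poly G' ((q ^ 2) ^ m)) \<and> degree G' \<le> (e - 1) div 2
     \<and> (e = 0 \<longrightarrow> G' = 0)"
proof (induction e)
  case 0
  show ?case
    by (rule exI[of _ 1], rule exI[of _ 0]) (simp add: F_one[simplified])
next
  case (Suc e)
  then obtain G G' where G: "\<And>m. F (2 * m) (q ^ e) q = poly G ((q ^ 2) ^ m)" "degree G \<le> e div 2"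
    and G': "\<And>m. F (2 * m + 1) (q ^ e) q = poly G' ((q ^ 2) ^ m)" "degree G' \<le> (e - 1) div 2"
      "e = 0 \<longrightarrow> G' = 0"
    by blast
  define P where "P = pcompose G' [:0, 1 / q ^ 2:]"
  have "degree (G + smult (q ^ e) ([:1, -1:] * P)) \<le> Suc e div 2"
  proof (cases "e = 0")
    case False
    have "degree P \<le> degree G'"
      unfolding P_def using degree_pcompose_le[of G' "[:0, 1 / q ^ 2:]"] by (simp split: if_splits)
    then have "degree ([:1, -1:] * P) \<le> Suc (degree G')"
      using degree_mult_le[of "[:1, -1:]" P] by simp
    moreover have "Suc ((e - 1) div 2) = Suc e div 2"
      using False by presburger
    ultimately have "degree (smult (q ^ e) ([:1, -1:] * P)) \<le> Suc e div 2"
      using G'(2) degree_smult_le[of "q ^ e" "[:1, -1:] * P"] by linarith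
    moreover have "degree G \<le> Suc e div 2"
      using G(2) div_le_mono[of e "Suc e" 2] by simp
    ultimately show ?thesis
      using degree_add_le by blast
  qed (use G G' in \<open>simp add: P_def\<close>)
  moreover have "degree (G' + smult (q ^ e) G) \<le> (Suc e - 1) div 2"
    using G(2) G'(2) div_le_mono[of "e - 1" e 2]
    by (intro degree_add_le) (simp_all add: order.trans[OF degree_smult_le])
  ultimately show ?case
    using F_qpow_moment_polys_Suc[OF G(1) G'(1)] unfolding P_def by blast
qed

lemma F_qpow_moments:
  assumes "p \<le> 1"
  obtains G where "\<And>m. F (2 * m + p) (q ^ k) q = poly G ((q ^ 2) ^ m)" "degree G \<le> (k - p) div 2"
  using F_qpow_moment_polys[of k] assms by (cases p) auto

lemma poly_pderiv_F_poly_even_one: "poly (pderiv (F_poly q (2 * m))) 1 = of_nat m"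
proof -
  define b where "b j = (- 1) ^ j * qbinom q (2 * m) j" for j
  define c where "c = 1 / qpoch q (q ^ 2) m"
  have F_poly: "F_poly q (2 * m) = smult c (\<Sum>j = 0..2 * m. monom (b j) j)"
    unfolding F_poly_def b_def c_def by simp
  have "c * (\<Sum>j = 0..2 * m. b j) = poly (F_poly q (2 * m)) 1"
    unfolding F_poly poly_smult poly_sum poly_monom by simp
  also have "\<dots> = 1"
    by (simp add: poly_F_poly F_one)
  finally have sum_b: "c * (\<Sum>j = 0..2 * m. b j) = 1" .
  have "b (2 * m - j) = b j" if "j \<le> 2 * m" for j
  proof -
    have "(- 1 :: 'a) ^ (2 * m - j) = (- 1) ^ j"
      using that by (simp add: minus_one_power_iff)
    then show ?thesis
      using qbinom_symmetric[OF that] by (simp add: b_def)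
  qed
  then have "2 * (\<Sum>j = 0..2 * m. of_nat j * b j) = of_nat (2 * m) * (\<Sum>j = 0..2 * m. b j)"
    by (rule sum_index_weighted_palindromic)
  \<comment> \<open>cancelling this factor 2 is where characteristic 0 is needed\<close>
  then have "2 * (c * (\<Sum>j = 0..2 * m. of_nat j * b j)) = 2 * of_nat m"
    using sum_b by (simp add: algebra_simps)
  moreover have "poly (pderiv (F_poly q (2 * m))) 1 = c * (\<Sum>j = 0..2 * m. of_nat j * b j)"
    unfolding F_poly pderiv_smult pderiv_sum pderiv_monom poly_smult poly_sum poly_monom
    by (simp add: mult_ac)
  ultimately show ?thesis
    by simp
qed

lemma power_int_q_inj: "inj (power_int q)"
proof -
  have "a = b" if "q powi a = q powi b" "b \<le> a" for a b
  proof -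
    have "q powi b * q ^ nat (a - b) = q powi b * 1"
      using that q_nonzero by (simp flip: power_int_add power_int_of_nat)
    then have "q ^ nat (a - b) = 1"
      using q_nonzero by (simp add: power_int_eq_0_iff)
    then show "a = b"
      using q_power_neq_1[of "nat (a - b)"] that(2) by (cases "nat (a - b) = 0") auto
  qed
  then show ?thesis
    by (metis injI linear)
qed

lemma F_hankel_dvd_qpowi:
  assumes "p \<le> 1" "e \<noteq> 0"
  shows "[:-(q powi e), 1:] ^ (n - (nat \<bar>e\<bar> - p) div 2) dvd det (F_hankel q p n)"
proof -
  define k where "k = nat \<bar>e\<bar>"
  obtain G where G: "\<And>m. F (2 * m + p) (q ^ k) q = poly G ((q ^ 2) ^ m)" "degree G \<le> (k - p) div 2"
    using F_qpow_moments[OF assms(1)] by blast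
  have hankel: "F_hankel q p n = mat (Suc n) (Suc n) (\<lambda>(i, j). (\<lambda>m. F_poly q (2 * m + p)) (i + j))"
    by (simp add: F_hankel_def algebra_simps)
  consider "e = int k" | "e = - int k"
    unfolding k_def by arith
  then show ?thesis
  proof cases
    case 1
    have "[:-(q ^ k), 1:] ^ (n - (k - p) div 2) dvd det (F_hankel q p n)"
      unfolding hankel by (rule hankel_det_dvd_root[where u = 1 and y = "q ^ 2" and G = G])
        (simp_all add: poly_F_poly G)
    with 1 show ?thesis
      by simp
  next
    case 2
    have "q ^ k \<noteq> 0"
      using q_nonzero by simp
    then have "poly (F_poly q (2 * m + p)) (1 / q ^ k)
        = ((1 / q ^ k) ^ 2) ^ m * poly (smult ((- 1 / q ^ k) ^ p) G) ((q ^ 2) ^ m)" for m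
    proof -
      have "(- 1 / q ^ k) ^ (2 * m + p) = ((1 / q ^ k) ^ 2) ^ m * (- 1 / q ^ k) ^ p"
        by (simp add: power_add power_mult power_minus_even del: power_Suc)
      with \<open>q ^ k \<noteq> 0\<close> show ?thesis
        by (simp add: poly_F_poly F_inverse G(1) del: power_Suc)
    qed
    then have "[:-(1 / q ^ k), 1:] ^ (n - (k - p) div 2) dvd det (F_hankel q p n)"
      unfolding hankel
      by (rule hankel_det_dvd_root[where u = "(1 / q ^ k) ^ 2" and y = "q ^ 2"])
        (rule order.trans[OF degree_smult_le G(2)])
    with 2 show ?thesis
      by (simp add: power_int_minus inverse_eq_divide)
  qed
qed

lemma F_hankel_even_dvd_one: "[:-1, 1:] ^ (2 * n) dvd det (F_hankel q 0 n)"
proof -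
  have "F_hankel q 0 n = mat (Suc n) (Suc n) (\<lambda>(i, j). (\<lambda>m. F_poly q (2 * m)) (i + j))"
    by (simp add: F_hankel_def)
  also have "[:-1, 1:] ^ (2 * n) dvd det \<dots>"
    by (rule hankel_det_dvd_one) (simp_all add: poly_F_poly F_one poly_pderiv_F_poly_even_one)
  finally show ?thesis .
qed

lemma F_hankel_odd_dvd_one: "[:-1, 1:] ^ (n + 1) dvd det (F_hankel q 1 n)"
proof -
  have "[:-1, 1:] ^ (sum (\<lambda>_. 1) {0..<Suc n} + sum (\<lambda>_. 0) {0..<Suc n}) dvd det (F_hankel q 1 n)"
  proof (rule power_sum_dvd_det)
    fix i j assume "i < Suc n" "j < Suc n"
    then have "poly (F_hankel q 1 n $$ (i, j)) 1 = 0"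
      using F_one(2)[of "i + j"] by (simp add: F_hankel_def poly_F_poly)
    then show "[:-1, 1:] ^ (1 + 0) dvd F_hankel q 1 n $$ (i, j)"
      by (simp add: poly_eq_0_iff_dvd)
  qed (simp add: F_hankel_def)
  then show ?thesis
    by simp
qed

lemma symmetric_qpow_product_dvd:
  assumes "\<And>e. \<bar>e\<bar> \<le> int K \<Longrightarrow> [:-(q powi e), 1:] ^ m (nat \<bar>e\<bar>) dvd P"
  shows "[:-1, 1:] ^ m 0 * (\<Prod>k = 1..K. ([:-(q ^ k), 1:] * [:-(1 / q ^ k), 1:]) ^ m k) dvd P"
  unfolding prod_power_int_symmetric[symmetric]
  by (rule prod_linear_powers_dvd) (auto intro: assms inj_on_subset[OF power_int_q_inj])

lemma hankel_even_factor_dvd: "hankel_even_factor q n dvd det (F_hankel q 0 n)"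
proof -
  define m where "m k = (if k = 0 then 2 * n else n - k div 2)" for k
  have "[:-1, 1:] ^ m 0 * (\<Prod>k = 1..2 * n + 1. ([:-(q ^ k), 1:] * [:-(1 / q ^ k), 1:]) ^ m k)
      dvd det (F_hankel q 0 n)"
  proof (rule symmetric_qpow_product_dvd)
    fix e :: int
    show "[:-(q powi e), 1:] ^ m (nat \<bar>e\<bar>) dvd det (F_hankel q 0 n)"
      using F_hankel_even_dvd_one F_hankel_dvd_qpowi[of 0 e n] by (cases "e = 0") (simp_all add: m_def)
  qed
  then show ?thesis
    unfolding hankel_even_factor_eq by (simp add: m_def)
qed

lemma hankel_odd_factor_dvd: "hankel_odd_factor q n dvd det (F_hankel q 1 n)"
proof -
  define m where "m k = (if k = 0 then n + 1 else n - (k - 1) div 2)" for k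
  have "[:-1, 1:] ^ m 0 * (\<Prod>k = 1..2 * n + 2. ([:-(q ^ k), 1:] * [:-(1 / q ^ k), 1:]) ^ m k)
      dvd det (F_hankel q 1 n)"
  proof (rule symmetric_qpow_product_dvd)
    fix e :: int
    show "[:-(q powi e), 1:] ^ m (nat \<bar>e\<bar>) dvd det (F_hankel q 1 n)"
      using F_hankel_odd_dvd_one F_hankel_dvd_qpowi[of 1 e n] by (cases "e = 0") (simp_all add: m_def)
  qed
  then have "smult ((- 1) ^ (n + 1)) (hankel_odd_factor q n) dvd det (F_hankel q 1 n)"
    unfolding hankel_odd_factor_eq[symmetric] by (simp add: m_def)
  then show ?thesis
    by (simp add: smult_dvd_iff)
qed

lemma D0_factorization: "D0 n s q = D0 n 0 q * poly (hankel_even_factor q n) s"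
proof -
  have "degree (det (F_hankel q 0 n)) \<le> degree (hankel_even_factor q n)"
    using degree_det_F_hankel[of q 0 n] by (simp only: degree_hankel_even_factor add_0_right)
  from poly_eq_poly_0_mult_of_dvd[OF hankel_even_factor_dvd hankel_factor_nonzero(1) this
      poly_hankel_factor_0(1)[OF q_nonzero], where s = s]
  show ?thesis
    by (simp only: poly_det_F_hankel)
qed

lemma D1_factorization: "D1 n s q = D1 n 0 q * poly (hankel_odd_factor q n) s"
proof -
  have "degree (det (F_hankel q 1 n)) \<le> degree (hankel_odd_factor q n)"
    using degree_det_F_hankel[of q 1 n] by (simp only: degree_hankel_odd_factor)
  from poly_eq_poly_0_mult_of_dvd[OF hankel_odd_factor_dvd hankel_factor_nonzero(2) this
      poly_hankel_factor_0(2)[OF q_nonzero], where s = s]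
  show ?thesis
    by (simp only: poly_det_F_hankel)
qed

end

theorem theorem3p2:
  fixes q s :: "'a::field_char_0"
  assumes "q \<noteq> 0"
    and "\<And>k::nat. k > 0 \<Longrightarrow> q ^ k \<noteq> 1"
  shows "D0 n s q = D0 n 0 q * (\<Prod>j=0..n. ((s - q ^ (2*j)) * (s - q ^ (2*j+1))
            * (s - 1 / q ^ (2*j)) * (s - 1 / q ^ (2*j+1))) ^ (n - j))
    \<and> D1 n s q = D1 n 0 q * (1 - s) ^ (n + 1) * (\<Prod>j=0..n. ((s - q ^ (2*j+2)) * (s - q ^ (2*j+1))
            * (s - 1 / q ^ (2*j+2)) * (s - 1 / q ^ (2*j+1))) ^ (n - j))"
proof -
  interpret q_not_root_of_unity q
    using assms by unfold_locales
  show ?thesis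
    using D0_factorization[of n s] D1_factorization[of n s]
    unfolding hankel_even_factor_def hankel_odd_factor_def poly_prod poly_power poly_mult
    by (simp add: mult.assoc)
qed

end
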